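(* Let $\mathcal{X}\subset\mathbb{R}^d$ be a full-dimensional polytope with vertex set $\mathcal{V}$, let ${\bm{u}}\in\mathbb{R}^d$, and let $B,B'\subseteq\mathcal{V}$ be affine bases of $\mathcal{X}$ (sets of $d+1$ affinely independent points) such that $B$ is an optimal spanning set of ${\bm{u}}$. Then ${\bm{v}}(B)\ge{\bm{v}}(B')$ coordinatewise.
   Context: For ${\bm{u}}\in\mathbb{R}^d$ write ${\bm{x}}\succeq{\bm{x}}'$ if $\langle{\bm{u}},{\bm{x}}\rangle\ge\langle{\bm{u}},{\bm{x}}'\rangle$, and $B_{\succeq{\bm{x}}}=\{{\bm{x}}'\in B:\langle{\bm{u}},{\bm{x}}'-{\bm{x}}\rangle\ge0\}$. A finite $B\subseteq\mathcal{X}$ is an optimal spanning set of ${\bm{u}}$ if every vertex ${\bm{x}}\in\mathcal{V}$ lies in the affine hull of $B_{\succeq{\bm{x}}}$. For $B=\{{\bm{x}}_0,\dots,{\bm{x}}_d\}$ with ${\bm{x}}_0\succeq\dots\succeq{\bm{x}}_d$, define ${\bm{v}}(B)=(\langle{\bm{u}},{\bm{x}}_0\rangle,\dots,\langle{\bm{u}},{\bm{x}}_d\rangle)\in\mathbb{R}^{d+1}$. *)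

theory Defs
  imports "HOL-Analysis.Analysis" "HOL-Library.Multiset"
begin

definition vertices :: "'a::euclidean_space set \<Rightarrow> 'a set" where
  "vertices X = {x. x extreme_point_of X}"

definition affine_basis :: "'a::euclidean_space set \<Rightarrow> bool" where
  "affine_basis B \<longleftrightarrow> finite B \<and> card B = DIM('a) + 1 \<and> \<not> affine_dependent B"

definition optimal_spanning_set :: "'a::euclidean_space set \<Rightarrow> 'a \<Rightarrow> 'a set \<Rightarrow> bool" where
  "optimal_spanning_set X u B \<longleftrightarrow> finite B \<and> B \<subseteq> X \<and>
     (\<forall>x \<in> vertices X. x \<in> affine hull {x' \<in> B. inner u (x' - x) \<ge> 0})"

definition vvec :: "'a::euclidean_space \<Rightarrow> 'a set \<Rightarrow> real list" where
  "vvec u B = rev (sorted_list_of_multiset (image_mset (\<lambda>x. inner u x) (mset_set B)))"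

end

theory Submission
  imports Defs
begin

text \<open>For every threshold \<open>t\<close>, the points of \<open>B'\<close> with value at least \<open>t\<close> are vertices
  of value at least \<open>t\<close>, so optimality of \<open>B\<close> puts them in the affine hull of the points of
  \<open>B\<close> with value at least \<open>t\<close>; being affinely independent, there are at most as many of them.
  Counting, for every \<open>t\<close>, how many entries of two non-increasing lists are at least \<open>t\<close>
  compares the lists entrywise.\<close>

lemma affine_independent_card_le:
  fixes S T :: "'a::euclidean_space set"
  assumes "finite S" "\<not> affine_dependent T" "T \<subseteq> affine hull S"
  shows "card T \<le> card S"
proof -
  have "aff_dim T \<le> aff_dim (affine hull S)" using aff_dim_subset[OF assms(3)] .
  also have "\<dots> \<le> int (card S) - 1" using aff_dim_le_card[OF assms(1)] by simp
  finally show ?thesis using aff_dim_affine_independent[OF assms(2)] by linarith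
qed

lemma length_filter_ge_sorted_desc:
  fixes xs :: "'b::linorder list"
  assumes "sorted_wrt (\<ge>) xs"
  shows "i < length (filter (\<lambda>y. t \<le> y) xs) \<longleftrightarrow> i < length xs \<and> t \<le> xs ! i"
  using assms
proof (induction xs arbitrary: i)
  case Nil
  then show ?case by simp
next
  case (Cons x xs)
  show ?case
  proof (cases "t \<le> x")
    case True
    then show ?thesis using Cons by (cases i) auto
  next
    case False
    then have "\<not> t \<le> y" if "y \<in> set xs" for y using Cons.prems that by auto
    then show ?thesis using False by (cases i) auto
  qed
qed

lemma sorted_desc_nth_le_if_filter_le:
  fixes xs ys :: "'b::linorder list"
  assumes "sorted_wrt (\<ge>) xs" "sorted_wrt (\<ge>) ys"
    and "\<And>t. length (filter (\<lambda>y. t \<le> y) ys) \<le> length (filter (\<lambda>x. t \<le> x) xs)"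
    and "i < length ys"
  shows "ys ! i \<le> xs ! i"
proof -
  have "i < length (filter (\<lambda>y. ys ! i \<le> y) ys)"
    using length_filter_ge_sorted_desc[OF assms(2)] assms(4) by simp
  then have "i < length (filter (\<lambda>x. ys ! i \<le> x) xs)"
    using assms(3) order_less_le_trans by blast
  then show ?thesis using length_filter_ge_sorted_desc[OF assms(1)] by blast
qed

lemma length_vvec: "length (vvec u B) = card B"
  by (metis vvec_def length_rev size_mset mset_sorted_list_of_multiset size_image_mset size_mset_set)

lemma sorted_wrt_vvec: "sorted_wrt (\<ge>) (vvec u B)"
  by (simp add: vvec_def sorted_wrt_rev)

lemma length_filter_vvec:
  assumes "finite B"
  shows "length (filter (\<lambda>y. t \<le> y) (vvec u B)) = card {b \<in> B. t \<le> inner u b}"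
proof -
  have "length (filter (\<lambda>y. t \<le> y) (vvec u B))
      = size (filter_mset (\<lambda>y. t \<le> y) (image_mset (inner u) (mset_set B)))"
    by (metis size_mset mset_filter mset_rev mset_sorted_list_of_multiset vvec_def)
  also have "\<dots> = card {b \<in> B. t \<le> inner u b}"
    using assms by (simp add: filter_mset_image_mset)
  finally show ?thesis .
qed

lemma optimal_spanning_set_upper_hull:
  assumes "optimal_spanning_set X u B" "x \<in> vertices X" "t \<le> inner u x"
  shows "x \<in> affine hull {b \<in> B. t \<le> inner u b}"
proof -
  have "x \<in> affine hull {b \<in> B. inner u (b - x) \<ge> 0}"
    using assms(1,2) unfolding optimal_spanning_set_def by blast
  moreover have "{b \<in> B. inner u (b - x) \<ge> 0} \<subseteq> {b \<in> B. t \<le> inner u b}"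
    using assms(3) by (auto simp: inner_diff_right)
  ultimately show ?thesis using hull_mono by blast
qed

lemma optimal_spanning_set_card_upper_le:
  assumes "optimal_spanning_set X u B" "B' \<subseteq> vertices X" "\<not> affine_dependent B'"
  shows "card {b \<in> B'. t \<le> inner u b} \<le> card {b \<in> B. t \<le> inner u b}"
proof (rule affine_independent_card_le)
  show "finite {b \<in> B. t \<le> inner u b}"
    using assms(1) unfolding optimal_spanning_set_def by simp
  show "\<not> affine_dependent {b \<in> B'. t \<le> inner u b}"
    by (rule affine_independent_subset[OF assms(3)]) auto
  show "{b \<in> B'. t \<le> inner u b} \<subseteq> affine hull {b \<in> B. t \<le> inner u b}"
    using optimal_spanning_set_upper_hull[OF assms(1)] assms(2) by auto
qed

theorem mainTheorem12:
  fixes X :: "'a::euclidean_space set" and u :: 'a and B B' :: "'a set"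
  assumes "polytope X"
    and "aff_dim X = int DIM('a)"
    and "B \<subseteq> vertices X" and "B' \<subseteq> vertices X"
    and "affine_basis B" and "affine_basis B'"
    and "optimal_spanning_set X u B"
  shows "length (vvec u B) = length (vvec u B') \<and>
         (\<forall>i < length (vvec u B). vvec u B' ! i \<le> vvec u B ! i)"
proof -
  have fin: "finite B" "finite B'" and "card B = card B'" and indep: "\<not> affine_dependent B'"
    using assms(5,6) unfolding affine_basis_def by auto
  then have len: "length (vvec u B) = length (vvec u B')"
    by (simp add: length_vvec)
  have "length (filter (\<lambda>y. t \<le> y) (vvec u B')) \<le> length (filter (\<lambda>y. t \<le> y) (vvec u B))" for t
    using optimal_spanning_set_card_upper_le[OF assms(7,4) indep]
    by (simp add: length_filter_vvec fin)
  then have "vvec u B' ! i \<le> vvec u B ! i" if "i < length (vvec u B')" for i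
    using sorted_desc_nth_le_if_filter_le[OF sorted_wrt_vvec sorted_wrt_vvec] that by blast
  with len show ?thesis by simp
qed

end
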